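(* For every $x\ge0$, $\lim_{\lambda\to\infty}V(x,\lambda)=x$.
   Context: Fix constants $p>0$ (premium rate), $q>0$ (discount rate), $d>0$, $\beta>0$, $\underline{\lambda}\ge0$, and distribution functions $F_U,F_Y$ of strictly positive random variables with finite expectation. For an initial intensity $\lambda\ge\underline{\lambda}$ the claim intensity is the shot-noise process $\lambda_t=\underline{\lambda}+e^{-dt}(\lambda-\underline{\lambda})+\sum_{k=1}^{\widetilde N_t}Y_k e^{-d(t-T_k)}$, where $\widetilde N_t=\#\{k:T_k\le t\}$ is a Poisson process of rate $\beta$ with arrival times $T_k$ and the $Y_k$ are i.i.d. with distribution $F_Y$, independent of $\widetilde N$. Conditionally on $(\lambda_s)_{s\ge0}$, the claim counting process $N_t=\#\{j:\tau_j\le t\}$ is an inhomogeneous Poisson process with intensity $\lambda_t$ (a Cox process), and the claim sizes $U_j$ are i.i.d. with distribution $F_U$, independent of all the rest. For initial surplus $x\ge0$ the surplus is $X_t=x+pt-\sum_{j=1}^{N_t}U_j$, and $(\mathcal F_t)$ is the completed filtration generated by the intensity jumps $(T_k,Y_k)$ and the claims $(\tau_j,U_j)$ up to time $t$. The premium satisfies $p=(1+\eta)\mathbb E(U_1)\lambda_{\mathrm{av}}$ with $\eta>0$ and $\lambda_{\mathrm{av}}=\lim_{t\to\infty}\mathbb E(\int_0^t\lambda_sds)/t$. A dividend strategy $L=(L_t)_{t\ge0}$ is admissible, $L\in\Pi_{x,\lambda}$, if it is non-decreasing, càdlàg, $(\mathcal F_t)$-adapted, $L_0\ge0$ and $L_t\le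 X_t$ for $t<\tau^L$, where $\tau^L=\inf\{t\ge0:X_t-L_{t^-}<0\}$ is the ruin time. Its value is $J(L;x,\lambda)=\mathbb E\big(\int_{0^-}^{\tau^L}e^{-qt}dL_t\big)$ and the optimal value function is $V(x,\lambda)=\sup_{L\in\Pi_{x,\lambda}}J(L;x,\lambda)$ for $x\ge0$, $\lambda\ge\underline{\lambda}$. *)

theory Defs
  imports "HOL-Probability.Probability"
begin

(* Arrival times of the intensity jumps: T_k = E_0 + ... + E_k (k = 0,1,2,...),
   with E_i i.i.d. Exp(beta) inter-arrival times. *)
definition arr :: "(nat \<Rightarrow> 'a \<Rightarrow> real) \<Rightarrow> nat \<Rightarrow> 'a \<Rightarrow> real" where
  "arr E k \<omega> = (\<Sum>i\<le>k. E i \<omega>)"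

definition intensity :: "real \<Rightarrow> real \<Rightarrow> (nat \<Rightarrow> 'a \<Rightarrow> real) \<Rightarrow> (nat \<Rightarrow> 'a \<Rightarrow> real)
    \<Rightarrow> real \<Rightarrow> real \<Rightarrow> 'a \<Rightarrow> real" where
  "intensity llow d E Y l0 t \<omega> =
     llow + exp (- d * t) * (l0 - llow)
     + (\<Sum>k\<in>{k. arr E k \<omega> \<le> t}. Y k \<omega> * exp (- d * (t - arr E k \<omega>)))"

definition Lam :: "real \<Rightarrow> real \<Rightarrow> (nat \<Rightarrow> 'a \<Rightarrow> real) \<Rightarrow> (nat \<Rightarrow> 'a \<Rightarrow> real)
    \<Rightarrow> real \<Rightarrow> real \<Rightarrow> 'a \<Rightarrow> real" where
  "Lam llow d E Y l0 t \<omega> = integral {0..t} (\<lambda>s. intensity llow d E Y l0 s \<omega>)"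

(* Claim arrival times of the Cox process, realised as the time change of a unit-rate
   Poisson process with arrival times S_j = G_0 + ... + G_j (G_i i.i.d. Exp(1),
   independent of the intensity): tau_j = inf{t >= 0. Lambda(t) >= S_j}. *)
definition claimtime :: "real \<Rightarrow> real \<Rightarrow> (nat \<Rightarrow> 'a \<Rightarrow> real) \<Rightarrow> (nat \<Rightarrow> 'a \<Rightarrow> real)
    \<Rightarrow> (nat \<Rightarrow> 'a \<Rightarrow> real) \<Rightarrow> real \<Rightarrow> nat \<Rightarrow> 'a \<Rightarrow> real" where
  "claimtime llow d E Y G l0 j \<omega> = Inf {t. 0 \<le> t \<and> arr G j \<omega> \<le> Lam llow d E Y l0 t \<omega>}"

definition surplus :: "real \<Rightarrow> real \<Rightarrow> (nat \<Rightarrow> 'a \<Rightarrow> real) \<Rightarrow> (nat \<Rightarrow> 'a \<Rightarrow> real)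
    \<Rightarrow> (nat \<Rightarrow> 'a \<Rightarrow> real) \<Rightarrow> (nat \<Rightarrow> 'a \<Rightarrow> real) \<Rightarrow> real \<Rightarrow> real \<Rightarrow> real
    \<Rightarrow> real \<Rightarrow> 'a \<Rightarrow> real" where
  "surplus llow d E Y G U p x l0 t \<omega> =
     x + p * t - (\<Sum>j\<in>{j. claimtime llow d E Y G l0 j \<omega> \<le> t}. U j \<omega>)"

definition nat_filt :: "'a measure \<Rightarrow> real \<Rightarrow> real \<Rightarrow> (nat \<Rightarrow> 'a \<Rightarrow> real) \<Rightarrow> (nat \<Rightarrow> 'a \<Rightarrow> real)
    \<Rightarrow> (nat \<Rightarrow> 'a \<Rightarrow> real) \<Rightarrow> (nat \<Rightarrow> 'a \<Rightarrow> real) \<Rightarrow> real \<Rightarrow> real \<Rightarrow> 'a set set" where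
  "nat_filt M llow d E Y G U l0 t = sigma_sets (space M)
     ({{\<omega>\<in>space M. arr E k \<omega> \<le> s \<and> Y k \<omega> \<le> y} | k s y. s \<le> t}
      \<union> {{\<omega>\<in>space M. claimtime llow d E Y G l0 j \<omega> \<le> s \<and> U j \<omega> \<le> y} | j s y. s \<le> t})"

definition completed :: "'a measure \<Rightarrow> 'a set set \<Rightarrow> 'a set set" where
  "completed M F = {A. A \<subseteq> space M \<and>
      (\<exists>B\<in>F. \<exists>N\<in>null_sets M. (A - B) \<union> (B - A) \<subseteq> N)}"

(* left limit L_{t-}, with L_{0-} = 0 *)
definition Lminus :: "(real \<Rightarrow> 'a \<Rightarrow> real) \<Rightarrow> real \<Rightarrow> 'a \<Rightarrow> real" where
  "Lminus L t \<omega> = (if t \<le> 0 then 0 else (SUP s\<in>{0..<t}. L s \<omega>))"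

definition ruin_time :: "(real \<Rightarrow> 'a \<Rightarrow> real) \<Rightarrow> (real \<Rightarrow> 'a \<Rightarrow> real) \<Rightarrow> 'a \<Rightarrow> ereal" where
  "ruin_time X L \<omega> = Inf {ereal t | t. 0 \<le> t \<and> X t \<omega> - Lminus L t \<omega> < 0}"

definition admissible :: "'a measure \<Rightarrow> (real \<Rightarrow> 'a set set) \<Rightarrow> (real \<Rightarrow> 'a \<Rightarrow> real)
    \<Rightarrow> (real \<Rightarrow> 'a \<Rightarrow> real) \<Rightarrow> bool" where
  "admissible M Fc X L \<longleftrightarrow>
     (\<forall>\<omega>\<in>space M.
        (\<forall>s t. 0 \<le> s \<longrightarrow> s \<le> t \<longrightarrow> L s \<omega> \<le> L t \<omega>)
      \<and> (\<forall>t\<ge>0. continuous (at_right t) (\<lambda>s. L s \<omega>))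
      \<and> 0 \<le> L 0 \<omega>
      \<and> (\<forall>t\<ge>0. ereal t < ruin_time X L \<omega> \<longrightarrow> L t \<omega> \<le> X t \<omega>))
   \<and> (\<forall>t\<ge>0. \<forall>B\<in>sets borel. {\<omega>\<in>space M. L t \<omega> \<in> B} \<in> Fc t)"

(* pathwise discounted dividends int_{0-}^{tau} e^{-qt} dL_t (Lebesgue-Stieltjes integral
   w.r.t. L extended by 0 on negative times, so the initial lump L_0 is included) *)
definition disc_div :: "real \<Rightarrow> (real \<Rightarrow> 'a \<Rightarrow> real) \<Rightarrow> ereal \<Rightarrow> 'a \<Rightarrow> ennreal" where
  "disc_div q L \<tau> \<omega> =
     (\<integral>\<^sup>+ s. indicator {s. 0 \<le> s \<and> ereal s < \<tau>} s * ennreal (exp (- q * s))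
        \<partial>interval_measure (\<lambda>s. if s < 0 then 0 else L s \<omega>))"

definition Jval :: "'a measure \<Rightarrow> real \<Rightarrow> (real \<Rightarrow> 'a \<Rightarrow> real) \<Rightarrow> (real \<Rightarrow> 'a \<Rightarrow> real) \<Rightarrow> ennreal" where
  "Jval M q X L = (\<integral>\<^sup>+ \<omega>. disc_div q L (ruin_time X L \<omega>) \<omega> \<partial>M)"

definition Vfun :: "'a measure \<Rightarrow> real \<Rightarrow> real \<Rightarrow> real \<Rightarrow> (nat \<Rightarrow> 'a \<Rightarrow> real) \<Rightarrow> (nat \<Rightarrow> 'a \<Rightarrow> real)
    \<Rightarrow> (nat \<Rightarrow> 'a \<Rightarrow> real) \<Rightarrow> (nat \<Rightarrow> 'a \<Rightarrow> real) \<Rightarrow> real \<Rightarrow> real \<Rightarrow> real \<Rightarrow> ennreal" where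
  "Vfun M q llow d E Y G U p x l0 =
     (SUP L\<in>{L. admissible M
                 (\<lambda>t. completed M (nat_filt M llow d E Y G U l0 t))
                 (surplus llow d E Y G U p x l0) L}.
        Jval M q (surplus llow d E Y G U p x l0) L)"

definition prim_family :: "(nat \<Rightarrow> 'a \<Rightarrow> real) \<Rightarrow> (nat \<Rightarrow> 'a \<Rightarrow> real) \<Rightarrow> (nat \<Rightarrow> 'a \<Rightarrow> real)
    \<Rightarrow> (nat \<Rightarrow> 'a \<Rightarrow> real) \<Rightarrow> nat \<times> nat \<Rightarrow> 'a \<Rightarrow> real" where
  "prim_family E Y G U = (\<lambda>(i, k). if i = 0 then E k else if i = 1 then Y k
                                    else if i = 2 then G k else U k)"

end

theory Submission
  imports Defs
begin

(*
  Lower bound: paying out the whole initial surplus x as a lump sum at time 0 is admissible,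
  so V(x, lambda) >= x.

  Upper bound: an admissible strategy has paid at most x + p t by time t, and discounting makes
  the value of any strategy at most 2 (x + 2 p / q). Paying more than x + p eps therefore requires
  survival past eps, hence X_eps >= 0, so the claims that arrived by eps sum to at most x + p eps.
  Claims are the unit Poisson points G_0 + ... + G_j time-changed by Lambda, and
  Lambda(eps) >= eps e^(-d eps) (lambda - llow). For fixed n the first n + 1 claims thus arrive
  before eps except on an event whose probability vanishes as lambda -> infinity, while
  U_0 + ... + U_n <= x + p eps has probability at most e^(x + p eps) rho^(n+1) with rho < 1
  (Chernoff bound). Letting n -> infinity and eps -> 0 gives limsup V(x, lambda) <= x.
*)

section \<open>Lebesgue-Stieltjes measures of dividend paths\<close>

lemma mono_zero_extension:
  fixes f :: "real \<Rightarrow> real"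
  assumes mono: "\<forall>s t. 0 \<le> s \<longrightarrow> s \<le> t \<longrightarrow> f s \<le> f t" and "0 \<le> f 0"
  shows "mono (\<lambda>s. if s < 0 then 0 else f s)"
proof (rule monoI)
  fix a b :: real assume "a \<le> b"
  have "0 \<le> f b" if "0 \<le> b"
    using mono[rule_format, OF order_refl that] \<open>0 \<le> f 0\<close> by simp
  then show "(if a < 0 then 0 else f a) \<le> (if b < 0 then 0 else f b)"
    using mono[rule_format, of a b] \<open>a \<le> b\<close> by auto
qed

lemma continuous_at_right_zero_extension:
  fixes f :: "real \<Rightarrow> real"
  assumes "\<forall>t\<ge>0. continuous (at_right t) f"
  shows "continuous (at_right a) (\<lambda>s. if s < 0 then 0 else f s)"
proof (cases "a < 0")
  case True
  have "\<forall>\<^sub>F s in at_right a. (if s < 0 then 0 else f s) = 0"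
    using eventually_at_right_real[OF True] by eventually_elim simp
  then show ?thesis
    unfolding continuous_within using True by (simp add: tendsto_eventually)
next
  case False
  have "\<forall>\<^sub>F s in at_right a. f s = (if s < 0 then 0 else f s)"
    using eventually_at_right_less[of a] by eventually_elim (use False in auto)
  moreover have "(f \<longlongrightarrow> f a) (at_right a)"
    using assms False unfolding continuous_within by simp
  ultimately show ?thesis
    using False unfolding continuous_within by (simp add: tendsto_cong)
qed

lemma emeasure_interval_measure_Ioo_le:
  fixes F :: "real \<Rightarrow> real"
  assumes mono: "mono F" and rc: "\<And>x. continuous (at_right x) F"
    and bound: "\<And>t. a < t \<Longrightarrow> t < b \<Longrightarrow> F t \<le> B"
  shows "emeasure (interval_measure F) {a<..<b} \<le> ennreal (B - F a)"
proof -
  define A where "A n = {a<..max a (b - 1 / Suc n)}" for n :: nat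
  have "incseq A"
  proof (intro monoI)
    fix m n :: nat assume "m \<le> n"
    then have "1 / Suc n \<le> 1 / Suc m"
      by (intro divide_left_mono) auto
    then show "A m \<subseteq> A n"
      unfolding A_def by auto
  qed
  have A_sets: "range A \<subseteq> sets (interval_measure F)"
    unfolding A_def by auto
  have A_le: "emeasure (interval_measure F) (A n) \<le> ennreal (B - F a)" for n
  proof (cases "b - 1 / Suc n \<le> a")
    case True
    then show ?thesis
      by (simp add: A_def)
  next
    case False
    then have "A n = {a<..b - 1 / Suc n}"
      by (simp add: A_def)
    moreover have "F (b - 1 / Suc n) \<le> B"
      using False by (intro bound) auto
    ultimately show ?thesis
      using False emeasure_interval_measure_Ioc[OF _ monoD[OF mono] rc]
      by (simp add: ennreal_leI)
  qed
  have "{a<..<b} \<subseteq> (\<Union>n. A n)"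
  proof
    fix t assume t: "t \<in> {a<..<b}"
    then obtain n where "1 / Suc n < b - t"
      by (metis diff_gt_0_iff_gt greaterThanLessThan_iff nat_approx_posE)
    then have "t \<in> A n"
      using t unfolding A_def by auto
    then show "t \<in> (\<Union>n. A n)" by blast
  qed
  then have "emeasure (interval_measure F) {a<..<b} \<le> emeasure (interval_measure F) (\<Union>n. A n)"
    by (rule emeasure_mono[OF _ sets.countable_UN[OF A_sets]])
  also have "\<dots> = (SUP n. emeasure (interval_measure F) (A n))"
    by (rule SUP_emeasure_incseq[symmetric, OF A_sets \<open>incseq A\<close>])
  also have "\<dots> \<le> ennreal (B - F a)"
    using A_le by (intro SUP_least)
  finally show ?thesis .
qed

lemma emeasure_interval_measure_initial_le:
  fixes F :: "real \<Rightarrow> real" and \<tau> :: ereal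
  assumes "mono F" and "\<And>x. continuous (at_right x) F" and zero: "\<And>s. s < 0 \<Longrightarrow> F s = 0"
    and bound: "\<And>t. 0 \<le> t \<Longrightarrow> ereal t < \<tau> \<Longrightarrow> F t \<le> B" and "0 \<le> B" and "\<tau> \<noteq> \<infinity>"
  shows "emeasure (interval_measure F) {s. 0 \<le> s \<and> ereal s < \<tau>} \<le> ennreal B"
proof (cases \<tau>)
  case (real m)
  have "F t \<le> B" if "-1 < t" "t < m" for t
    using zero bound \<open>0 \<le> B\<close> real that by (cases "t < 0") auto
  note Ioo_le = emeasure_interval_measure_Ioo_le[OF assms(1,2) this]
  have "{s. 0 \<le> s \<and> ereal s < \<tau>} \<subseteq> {-1<..<m}"
    using real by auto
  then have "emeasure (interval_measure F) {s. 0 \<le> s \<and> ereal s < \<tau>}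
      \<le> emeasure (interval_measure F) {-1<..<m}"
    by (rule emeasure_mono) simp
  also have "\<dots> \<le> ennreal (B - F (-1))"
    by (rule Ioo_le)
  also have "F (-1) = 0"
    by (rule zero) simp
  finally show ?thesis
    by simp
qed (use \<open>\<tau> \<noteq> \<infinity>\<close> in auto)

lemma geometric_block_term_le:
  fixes x p h :: real
  assumes "0 \<le> x" and "0 \<le> p" and "0 \<le> h"
  shows "exp (-2) ^ m * (x + p * (Suc m * h)) \<le> (x + p * h) * (1 / 2) ^ m"
proof -
  have "2 * 2 \<le> exp (1::real) * exp 1"
    using exp_ge_add_one_self[of 1] by (intro mult_mono) auto
  then have "exp (-2) \<le> (1 / 4 :: real)"
    by (simp add: exp_minus exp_add[symmetric] field_simps)
  have "real (Suc m) \<le> 2 ^ m"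
    using Suc_leI[OF less_exp[of m]] by (metis of_nat_le_iff of_nat_numeral of_nat_power)
  have "x + p * (Suc m * h) = x + Suc m * (p * h)"
    by (simp only: mult.left_commute)
  also have "\<dots> \<le> Suc m * x + Suc m * (p * h)"
    using mult_right_mono[of 1 "real (Suc m)" x] \<open>0 \<le> x\<close> by (intro add_right_mono) simp
  also have "\<dots> = Suc m * (x + p * h)"
    by (simp only: distrib_left)
  also have "\<dots> \<le> 2 ^ m * (x + p * h)"
    using \<open>real (Suc m) \<le> 2 ^ m\<close> assms by (intro mult_right_mono) simp_all
  finally have "exp (-2) ^ m * (x + p * (Suc m * h)) \<le> (1 / 4) ^ m * (2 ^ m * (x + p * h))"
    using \<open>exp (-2) \<le> 1 / 4\<close> assms by (intro mult_mono power_mono) simp_all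
  also have "\<dots> = (x + p * h) * (1 / 2) ^ m"
    by (simp add: power_mult_distrib[symmetric])
  finally show ?thesis .
qed

lemma exists_block_discount_le:
  assumes "0 < q" and "0 \<le> s"
  shows "\<exists>m::nat. s < Suc m * (2 / q) \<and> exp (- q * s) \<le> exp (-2) ^ m"
proof -
  define h where "h = 2 / q"
  have "0 < h"
    using \<open>0 < q\<close> by (simp add: h_def)
  define m where "m = nat \<lfloor>s / h\<rfloor>"
  have "real m = of_int \<lfloor>s / h\<rfloor>"
    using assms \<open>0 < h\<close> by (simp add: m_def)
  then have "real m \<le> s / h" and "s / h < real m + 1"
    using floor_correct[of "s / h"] by simp_all
  then have "m * h \<le> s" and "s < Suc m * h"
    using \<open>0 < h\<close> by (simp_all add: pos_le_divide_eq pos_divide_less_eq add.commute)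
  have "exp (- q * s) \<le> exp (- q * (m * h))"
    using \<open>m * h \<le> s\<close> \<open>0 < q\<close> by simp
  also have "\<dots> = exp (-2) ^ m"
    using \<open>0 < q\<close> by (simp add: h_def exp_of_nat_mult[symmetric])
  finally show ?thesis
    using \<open>s < Suc m * h\<close> unfolding h_def by blast
qed

context
  fixes L :: "real \<Rightarrow> 'a \<Rightarrow> real" and \<omega> :: 'a
  assumes L_mono: "\<forall>s t. 0 \<le> s \<longrightarrow> s \<le> t \<longrightarrow> L s \<omega> \<le> L t \<omega>"
    and L_right_cont: "\<forall>t\<ge>0. continuous (at_right t) (\<lambda>s. L s \<omega>)"
    and L_0: "0 \<le> L 0 \<omega>"
begin

lemma emeasure_dividends_initial_le:
  assumes "\<And>t. 0 \<le> t \<Longrightarrow> ereal t < \<tau> \<Longrightarrow> L t \<omega> \<le> B" and "0 \<le> B" and "\<tau> \<noteq> \<infinity>"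
  shows "emeasure (interval_measure (\<lambda>s. if s < 0 then 0 else L s \<omega>)) {s. 0 \<le> s \<and> ereal s < \<tau>}
    \<le> ennreal B"
  by (rule emeasure_interval_measure_initial_le[OF mono_zero_extension[OF L_mono L_0]
        continuous_at_right_zero_extension[OF L_right_cont]])
     (use assms in auto)

lemma disc_div_le:
  assumes "\<And>t. 0 \<le> t \<Longrightarrow> ereal t < \<tau> \<Longrightarrow> L t \<omega> \<le> B" and "0 \<le> B" and "\<tau> \<noteq> \<infinity>" and "0 \<le> q"
  shows "disc_div q L \<tau> \<omega> \<le> ennreal B"
proof -
  let ?\<mu> = "interval_measure (\<lambda>s. if s < 0 then 0 else L s \<omega>)"
  let ?S = "{s. 0 \<le> s \<and> ereal s < \<tau>}"
  have "?S \<in> sets ?\<mu>"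
    by simp measurable
  have "disc_div q L \<tau> \<omega> \<le> (\<integral>\<^sup>+ s. indicator ?S s \<partial>?\<mu>)"
    unfolding disc_div_def using \<open>0 \<le> q\<close>
    by (intro nn_integral_mono) (auto simp: indicator_def)
  also have "\<dots> = emeasure ?\<mu> ?S"
    using \<open>?S \<in> sets ?\<mu>\<close> by simp
  also have "\<dots> \<le> ennreal B"
    by (rule emeasure_dividends_initial_le[OF assms(1-3)])
  finally show ?thesis .
qed

(* On the m-th block [2m/q, 2(m+1)/q) the discount factor is at most e^(-2m), while the
   dividends paid by the end of the block are at most x + p 2(m+1)/q. *)
lemma disc_div_le_geometric:
  assumes bound: "\<And>t. 0 \<le> t \<Longrightarrow> ereal t < \<tau> \<Longrightarrow> L t \<omega> \<le> x + p * t"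
    and "0 \<le> x" and "0 \<le> p" and "0 < q"
  shows "disc_div q L \<tau> \<omega> \<le> ennreal (2 * (x + 2 * p / q))"
proof -
  let ?\<mu> = "interval_measure (\<lambda>s. if s < 0 then 0 else L s \<omega>)"
  define h where "h = 2 / q"
  define I where "I m = {s. 0 \<le> s \<and> ereal s < min \<tau> (ereal (Suc m * h))}" for m :: nat
  have "0 < h"
    using \<open>0 < q\<close> by (simp add: h_def)
  have pointwise: "indicator {s. 0 \<le> s \<and> ereal s < \<tau>} s * ennreal (exp (- q * s))
      \<le> (\<Sum>m. ennreal (exp (-2) ^ m) * indicator (I m) s)" for s
  proof (cases "0 \<le> s \<and> ereal s < \<tau>")
    case True
    then obtain m where "s < Suc m * h" and "exp (- q * s) \<le> exp (-2) ^ m"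
      using exists_block_discount_le[OF \<open>0 < q\<close>] unfolding h_def by blast
    then have "indicator {s. 0 \<le> s \<and> ereal s < \<tau>} s * ennreal (exp (- q * s))
        \<le> ennreal (exp (-2) ^ m) * indicator (I m) s"
      using True by (simp add: I_def ennreal_leI)
    also have "\<dots> \<le> (\<Sum>m. ennreal (exp (-2) ^ m) * indicator (I m) s)"
      using sum_le_suminf[OF summableI, of "{m}"] by simp
    finally show ?thesis .
  qed simp
  have I_le: "emeasure ?\<mu> (I m) \<le> ennreal (x + p * (Suc m * h))" for m
    unfolding I_def
  proof (rule emeasure_dividends_initial_le)
    fix t assume "0 \<le> t" and "ereal t < min \<tau> (ereal (Suc m * h))"
    then have "L t \<omega> \<le> x + p * t" and "t \<le> Suc m * h"
      using bound by auto
    then show "L t \<omega> \<le> x + p * (Suc m * h)"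
      using \<open>0 \<le> p\<close> by (smt (verit) mult_left_mono)
  qed (use \<open>0 \<le> x\<close> \<open>0 \<le> p\<close> \<open>0 < h\<close> in \<open>auto simp: min_def\<close>)
  have "disc_div q L \<tau> \<omega> \<le> (\<integral>\<^sup>+ s. (\<Sum>m. ennreal (exp (-2) ^ m) * indicator (I m) s) \<partial>?\<mu>)"
    unfolding disc_div_def by (intro nn_integral_mono pointwise)
  also have "\<dots> = (\<Sum>m. ennreal (exp (-2) ^ m) * emeasure ?\<mu> (I m))"
    unfolding I_def by (simp add: nn_integral_suminf nn_integral_cmult_indicator)
  also have "\<dots> \<le> (\<Sum>m. ennreal ((x + p * h) * (1 / 2) ^ m))"
  proof (intro suminf_le summableI)
    fix m
    have "ennreal (exp (-2) ^ m) * emeasure ?\<mu> (I m) \<le> ennreal (exp (-2) ^ m * (x + p * (Suc m * h)))"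
      using I_le[of m] \<open>0 \<le> x\<close> \<open>0 \<le> p\<close> \<open>0 < h\<close> by (simp add: ennreal_mult mult_left_mono)
    also have "\<dots> \<le> ennreal ((x + p * h) * (1 / 2) ^ m)"
      using geometric_block_term_le \<open>0 \<le> x\<close> \<open>0 \<le> p\<close> \<open>0 < h\<close> by (simp add: ennreal_leI)
    finally show "ennreal (exp (-2) ^ m) * emeasure ?\<mu> (I m) \<le> ennreal ((x + p * h) * (1 / 2) ^ m)" .
  qed
  also have "\<dots> = ennreal (\<Sum>m. (x + p * h) * (1 / 2) ^ m)"
    using \<open>0 \<le> x\<close> \<open>0 \<le> p\<close> \<open>0 < h\<close>
    by (intro suminf_ennreal2) (auto intro: summable_mult summable_geometric)
  also have "(\<Sum>m. (x + p * h) * (1 / 2 :: real) ^ m) = 2 * (x + p * h)"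
    using suminf_geometric[of "1 / 2 :: real"] by (simp add: suminf_mult)
  finally show ?thesis
    by (simp add: h_def)
qed

end

lemma disc_div_const_ge:
  fixes L :: "real \<Rightarrow> 'a \<Rightarrow> real" and \<tau> :: ereal
  assumes L: "\<And>s. L s \<omega> = c" and "0 \<le> c" and "0 < \<tau>"
  shows "ennreal c \<le> disc_div q L \<tau> \<omega>"
proof -
  define F where "F s = (if s < 0 then 0 else c)" for s :: real
  have "mono F"
    using \<open>0 \<le> c\<close> by (intro mono_zero_extension[of "\<lambda>_. c", folded F_def]) auto
  have rc: "continuous (at_right a) F" for a
    unfolding F_def by (rule continuous_at_right_zero_extension) simp
  let ?\<mu> = "interval_measure F"
  have "emeasure ?\<mu> {-1<..0} = ennreal c"
    using emeasure_interval_measure_Ioc[OF _ monoD[OF \<open>mono F\<close>] rc, of "-1" 0] by (simp add: F_def)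
  moreover have "emeasure ?\<mu> {-1<..<0} = 0"
    using emeasure_interval_measure_Ioo_le[OF \<open>mono F\<close> rc, of "-1" 0 0] by (simp add: F_def)
  moreover have "emeasure ?\<mu> {0} + emeasure ?\<mu> {-1<..<0} = emeasure ?\<mu> {-1<..0}"
    by (subst plus_emeasure) (auto intro: arg_cong[where f="emeasure ?\<mu>"])
  ultimately have "ennreal c = (\<integral>\<^sup>+ s. indicator {0} s \<partial>?\<mu>)"
    by simp
  also have "\<dots> \<le> (\<integral>\<^sup>+ s. indicator {s. 0 \<le> s \<and> ereal s < \<tau>} s * ennreal (exp (- q * s)) \<partial>?\<mu>)"
    using \<open>0 < \<tau>\<close> by (intro nn_integral_mono) (auto simp: indicator_def zero_ereal_def)
  also have "\<dots> = disc_div q L \<tau> \<omega>"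
    unfolding disc_div_def F_def L ..
  finally show ?thesis .
qed

section \<open>Ruin time and the lump-sum strategy\<close>

lemma Lminus_const: "Lminus (\<lambda>t \<omega>. f \<omega>) t \<omega> = (if t \<le> 0 then 0 else f \<omega>)"
  unfolding Lminus_def by simp

lemma le_ruin_timeI:
  assumes "\<And>t. 0 \<le> t \<Longrightarrow> t < \<eta> \<Longrightarrow> 0 \<le> X t \<omega> - Lminus L t \<omega>"
  shows "ereal \<eta> \<le> ruin_time X L \<omega>"
  unfolding ruin_time_def
proof (rule Inf_greatest, clarify)
  fix t assume "0 \<le> t" and "X t \<omega> - Lminus L t \<omega> < 0"
  then show "ereal \<eta> \<le> ereal t"
    using assms[of t] by (cases "t < \<eta>") auto
qed

lemma nonneg_before_ruin_time:
  assumes "0 \<le> t" and "ereal t < ruin_time X L \<omega>"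
  shows "0 \<le> X t \<omega> - Lminus L t \<omega>"
proof (rule ccontr)
  assume "\<not> 0 \<le> X t \<omega> - Lminus L t \<omega>"
  then have "ruin_time X L \<omega> \<le> ereal t"
    unfolding ruin_time_def using \<open>0 \<le> t\<close> by (intro Inf_lower) auto
  then show False
    using assms(2) by simp
qed

lemma admissibleD:
  assumes "admissible M Fc X L" and "\<omega> \<in> space M"
  shows "\<forall>s t. 0 \<le> s \<longrightarrow> s \<le> t \<longrightarrow> L s \<omega> \<le> L t \<omega>"
    and "\<forall>t\<ge>0. continuous (at_right t) (\<lambda>s. L s \<omega>)"
    and "0 \<le> L 0 \<omega>"
    and "\<And>t. 0 \<le> t \<Longrightarrow> ereal t < ruin_time X L \<omega> \<Longrightarrow> L t \<omega> \<le> X t \<omega>"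
  using assms unfolding admissible_def by auto

lemma completed_sigma_setsI:
  assumes "S \<in> sets M" and "S \<in> null_sets M \<or> space M - S \<in> null_sets M"
  shows "S \<in> completed M (sigma_sets (space M) G)"
  using assms(2)
proof
  assume "S \<in> null_sets M"
  moreover have "{} \<in> sigma_sets (space M) G" and "(S - {}) \<union> ({} - S) \<subseteq> S"
    by (auto intro: sigma_sets.Empty)
  ultimately show ?thesis
    unfolding completed_def using sets.sets_into_space[OF \<open>S \<in> sets M\<close>] by blast
next
  assume "space M - S \<in> null_sets M"
  moreover have "space M \<in> sigma_sets (space M) G" and "(S - space M) \<union> (space M - S) \<subseteq> space M - S"
    using sets.sets_into_space[OF \<open>S \<in> sets M\<close>] by (auto intro: sigma_sets_top)
  ultimately show ?thesis
    unfolding completed_def using sets.sets_into_space[OF \<open>S \<in> sets M\<close>] by blast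
qed

lemma admissible_lump_sum:
  assumes A: "A \<in> sets M" "space M - A \<in> null_sets M" and "0 \<le> x"
    and X_0: "\<And>\<omega>. \<omega> \<in> A \<Longrightarrow> x \<le> X 0 \<omega>"
  shows "admissible M (\<lambda>t. completed M (sigma_sets (space M) (G t))) X (\<lambda>t \<omega>. if \<omega> \<in> A then x else 0)"
  unfolding admissible_def
proof (intro conjI ballI allI impI)
  fix \<omega> t assume "0 \<le> t" and "ereal t < ruin_time X (\<lambda>t \<omega>. if \<omega> \<in> A then x else 0) \<omega>"
  then have "0 \<le> X t \<omega> - (if t \<le> 0 then 0 else if \<omega> \<in> A then x else 0)"
    by (subst Lminus_const[symmetric]) (rule nonneg_before_ruin_time)
  then show "(if \<omega> \<in> A then x else 0) \<le> X t \<omega>"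
    using X_0[of \<omega>] \<open>0 \<le> t\<close> by (cases "t = 0"; cases "\<omega> \<in> A") simp_all
next
  fix t :: real and B :: "real set"
  let ?S = "{\<omega>\<in>space M. (if \<omega> \<in> A then x else 0) \<in> B}"
  have "A \<subseteq> space M"
    using A(1) by (rule sets.sets_into_space)
  then have "?S \<in> {space M, {}, A, space M - A}"
    by (cases "x \<in> B"; cases "0 \<in> B") auto
  moreover have "S \<in> completed M (sigma_sets (space M) (G t))" if "S \<in> {space M, {}, A, space M - A}" for S
    using that A Diff_Diff_Int[of "space M" A] Int_absorb1[OF \<open>A \<subseteq> space M\<close>]
    by (auto intro!: completed_sigma_setsI)
  ultimately show "?S \<in> completed M (sigma_sets (space M) (G t))"
    by blast
qed (use \<open>0 \<le> x\<close> in auto)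

section \<open>Partial sums of independent positive random variables\<close>

context prob_space
begin

lemma indep_sets_reindex:
  assumes indep: "indep_sets F I" and "inj_on f J" and "f ` J \<subseteq> I"
  shows "indep_sets (\<lambda>j. F (f j)) J"
  unfolding indep_sets_def
proof (intro conjI ballI allI impI)
  fix j assume "j \<in> J"
  then show "F (f j) \<subseteq> events"
    using indep \<open>f ` J \<subseteq> I\<close> unfolding indep_sets_def by auto
next
  fix K A assume K: "K \<subseteq> J" "K \<noteq> {}" "finite K" and A: "A \<in> Pi K (\<lambda>j. F (f j))"
  have inj: "inj_on f K"
    using \<open>inj_on f J\<close> K(1) by (rule inj_on_subset)
  define A' where "A' i = A (the_inv_into K f i)" for i
  have A'_f: "A' (f k) = A k" if "k \<in> K" for k
    using the_inv_into_f_f[OF inj that] by (simp add: A'_def)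
  have "A' \<in> Pi (f ` K) F"
  proof
    fix i assume "i \<in> f ` K"
    then obtain k where "k \<in> K" and "i = f k"
      by blast
    then show "A' i \<in> F i"
      using Pi_mem[OF A] A'_f by simp
  qed
  moreover have "f ` K \<subseteq> I" and "f ` K \<noteq> {}" and "finite (f ` K)"
    using K \<open>f ` J \<subseteq> I\<close> by auto
  ultimately have "prob (\<Inter>i\<in>f ` K. A' i) = (\<Prod>i\<in>f ` K. prob (A' i))"
    using indep[unfolded indep_sets_def, THEN conjunct2, rule_format] by blast
  then show "prob (\<Inter>j\<in>K. A j) = (\<Prod>j\<in>K. prob (A j))"
    by (simp add: prod.reindex[OF inj] A'_f)
qed

lemma indep_vars_reindex:
  assumes "indep_vars M' X I" and "inj_on f J" and "f ` J \<subseteq> I"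
  shows "indep_vars (\<lambda>j. M' (f j)) (\<lambda>j. X (f j)) J"
  using assms indep_sets_reindex[of "\<lambda>i. {X i -` A \<inter> space M |A. A \<in> sets (M' i)}" I f J]
  unfolding indep_vars_def2 by auto

lemma nn_integral_exp_neg_le:
  fixes Z :: "'a \<Rightarrow> real"
  assumes Z: "Z \<in> borel_measurable M" and nonneg: "AE \<omega> in M. 0 \<le> Z \<omega>" and "0 < \<delta>"
  shows "(\<integral>\<^sup>+\<omega>. ennreal (exp (- Z \<omega>)) \<partial>M)
    \<le> ennreal (exp (-\<delta>) + (1 - exp (-\<delta>)) * prob {\<omega>\<in>space M. Z \<omega> \<le> \<delta>})"
proof -
  let ?S = "{\<omega>\<in>space M. Z \<omega> \<le> \<delta>}"
  have "?S \<in> events"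
    using Z by measurable
  have "exp (-\<delta>) \<le> 1"
    using \<open>0 < \<delta>\<close> by simp
  have "AE \<omega> in M. ennreal (exp (- Z \<omega>)) \<le> ennreal (exp (-\<delta>)) + ennreal (1 - exp (-\<delta>)) * indicator ?S \<omega>"
    using nonneg AE_space
  proof eventually_elim
    case (elim \<omega>)
    show ?case
    proof (cases "\<omega> \<in> ?S")
      case True
      then show ?thesis
        using elim \<open>exp (-\<delta>) \<le> 1\<close> by (simp add: ennreal_plus[symmetric] del: ennreal_plus)
    next
      case False
      then have "exp (- Z \<omega>) \<le> exp (-\<delta>)"
        using elim by simp
      then show ?thesis
        using False by (simp add: ennreal_leI)
    qed
  qed
  then have "(\<integral>\<^sup>+\<omega>. ennreal (exp (- Z \<omega>)) \<partial>M)
      \<le> (\<integral>\<^sup>+\<omega>. ennreal (exp (-\<delta>)) + ennreal (1 - exp (-\<delta>)) * indicator ?S \<omega> \<partial>M)"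
    by (rule nn_integral_mono_AE)
  also have "\<dots> = ennreal (exp (-\<delta>)) + ennreal (1 - exp (-\<delta>)) * emeasure M ?S"
    using \<open>?S \<in> events\<close> by (simp add: nn_integral_add nn_integral_cmult_indicator emeasure_space_1)
  also have "\<dots> = ennreal (exp (-\<delta>) + (1 - exp (-\<delta>)) * prob ?S)"
    using \<open>exp (-\<delta>) \<le> 1\<close> by (simp add: emeasure_eq_measure ennreal_plus ennreal_mult)
  finally show ?thesis .
qed

(* Chernoff bound: the indicator of {S <= K} is at most e^(K - S), and independence factorises
   the expectation of e^(-S). *)
lemma prob_partial_sum_le:
  fixes Z :: "nat \<Rightarrow> 'a \<Rightarrow> real"
  assumes indep: "indep_vars (\<lambda>_. borel) Z UNIV" and nonneg: "\<And>k. AE \<omega> in M. 0 \<le> Z k \<omega>"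
    and small: "\<And>k. prob {\<omega>\<in>space M. Z k \<omega> \<le> \<delta>} \<le> a" and "0 < \<delta>"
  shows "prob {\<omega>\<in>space M. (\<Sum>k\<le>n. Z k \<omega>) \<le> K} \<le> exp K * (exp (-\<delta>) + (1 - exp (-\<delta>)) * a) ^ Suc n"
proof -
  define \<rho> where "\<rho> = exp (-\<delta>) + (1 - exp (-\<delta>)) * a"
  have Z: "Z k \<in> borel_measurable M" for k
    using indep unfolding indep_vars_def by auto
  have "0 \<le> a"
    using small[of 0] measure_nonneg order_trans by blast
  then have "0 \<le> \<rho>"
    using \<open>0 < \<delta>\<close> by (simp add: \<rho>_def)
  let ?S = "{\<omega>\<in>space M. (\<Sum>k\<le>n. Z k \<omega>) \<le> K}"
  have "?S \<in> events"
    using Z by measurable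
  have "indep_vars (\<lambda>_. borel) (\<lambda>k \<omega>. ennreal (exp (- Z k \<omega>))) {..n}"
    by (rule indep_vars_subset[OF indep_vars_compose2[OF indep]]) auto
  then have factor: "(\<integral>\<^sup>+\<omega>. (\<Prod>k\<le>n. ennreal (exp (- Z k \<omega>))) \<partial>M) = (\<Prod>k\<le>n. \<integral>\<^sup>+\<omega>. exp (- Z k \<omega>) \<partial>M)"
    by (rule indep_vars_nn_integral[rotated]) auto
  have "emeasure M ?S \<le> (\<integral>\<^sup>+\<omega>. ennreal (exp K) * (\<Prod>k\<le>n. ennreal (exp (- Z k \<omega>))) \<partial>M)"
    unfolding nn_integral_indicator[OF \<open>?S \<in> events\<close>, symmetric]
  proof (intro nn_integral_mono)
    fix \<omega>
    have "(\<Prod>k\<le>n. ennreal (exp (- Z k \<omega>))) = ennreal (exp (- (\<Sum>k\<le>n. Z k \<omega>)))"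
      by (simp add: prod_ennreal exp_sum[symmetric] sum_negf)
    then have "ennreal (exp K) * (\<Prod>k\<le>n. ennreal (exp (- Z k \<omega>))) = ennreal (exp (K - (\<Sum>k\<le>n. Z k \<omega>)))"
      by (simp add: ennreal_mult[symmetric] exp_diff exp_minus divide_inverse)
    then show "indicator ?S \<omega> \<le> ennreal (exp K) * (\<Prod>k\<le>n. ennreal (exp (- Z k \<omega>)))"
      by (auto simp: indicator_def intro!: ennreal_leI[of 1, simplified])
  qed
  also have "\<dots> = ennreal (exp K) * (\<Prod>k\<le>n. \<integral>\<^sup>+\<omega>. exp (- Z k \<omega>) \<partial>M)"
    using Z by (simp add: nn_integral_cmult factor)
  also have "\<dots> \<le> ennreal (exp K) * (\<Prod>k\<le>n. ennreal \<rho>)"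
  proof (intro mult_left_mono prod_mono_ennreal)
    fix k
    have "exp (-\<delta>) + (1 - exp (-\<delta>)) * prob {\<omega>\<in>space M. Z k \<omega> \<le> \<delta>} \<le> \<rho>"
      using small[of k] \<open>0 < \<delta>\<close> by (simp add: \<rho>_def mult_left_mono)
    then show "(\<integral>\<^sup>+\<omega>. exp (- Z k \<omega>) \<partial>M) \<le> ennreal \<rho>"
      by (rule order_trans[OF nn_integral_exp_neg_le[OF Z nonneg \<open>0 < \<delta>\<close>] ennreal_leI])
  qed simp
  also have "\<dots> = ennreal (exp K * \<rho> ^ Suc n)"
    using \<open>0 \<le> \<rho>\<close> by (simp add: prod_ennreal ennreal_mult ennreal_power)
  finally show ?thesis
    using \<open>0 \<le> \<rho>\<close> by (simp add: emeasure_eq_measure \<rho>_def)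
qed

lemma prob_partial_sum_le_tendsto_zero:
  fixes Z :: "nat \<Rightarrow> 'a \<Rightarrow> real"
  assumes indep: "indep_vars (\<lambda>_. borel) Z UNIV" and nonneg: "\<And>k. AE \<omega> in M. 0 \<le> Z k \<omega>"
    and small: "\<And>k. prob {\<omega>\<in>space M. Z k \<omega> \<le> \<delta>} \<le> a" and "0 < \<delta>" and "a < 1"
  shows "(\<lambda>n. prob {\<omega>\<in>space M. (\<Sum>k\<le>n. Z k \<omega>) \<le> K}) \<longlonglongrightarrow> 0"
proof (rule tendsto_sandwich[OF always_eventually always_eventually tendsto_const])
  define \<rho> where "\<rho> = exp (-\<delta>) + (1 - exp (-\<delta>)) * a"
  have "0 \<le> a"
    using small[of 0] measure_nonneg order_trans by blast
  have "exp (-\<delta>) < 1"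
    using \<open>0 < \<delta>\<close> by simp
  then have "(1 - exp (-\<delta>)) * a < 1 - exp (-\<delta>)"
    using \<open>a < 1\<close> mult_strict_left_mono[of a 1 "1 - exp (-\<delta>)"] by simp
  then have "\<rho> < 1"
    unfolding \<rho>_def by linarith
  moreover have "0 \<le> \<rho>"
    unfolding \<rho>_def using \<open>0 \<le> a\<close> \<open>exp (-\<delta>) < 1\<close> by simp
  ultimately have "(\<lambda>n. exp K * \<rho> ^ Suc n) \<longlonglongrightarrow> 0"
    by (intro tendsto_mult_right_zero LIMSEQ_Suc LIMSEQ_power_zero) auto
  then show "(\<lambda>n. exp K * (exp (-\<delta>) + (1 - exp (-\<delta>)) * a) ^ Suc n) \<longlonglongrightarrow> 0"
    by (simp add: \<rho>_def)
  show "\<forall>n. prob {\<omega>\<in>space M. (\<Sum>k\<le>n. Z k \<omega>) \<le> K} \<le> exp K * (exp (-\<delta>) + (1 - exp (-\<delta>)) * a) ^ Suc n"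
    using prob_partial_sum_le[OF indep nonneg small \<open>0 < \<delta>\<close>] by blast
qed simp

lemma AE_partial_sums_unbounded:
  fixes Z :: "nat \<Rightarrow> 'a \<Rightarrow> real"
  assumes indep: "indep_vars (\<lambda>_. borel) Z UNIV"
    and tendsto: "\<And>K. (\<lambda>n. prob {\<omega>\<in>space M. (\<Sum>k\<le>n. Z k \<omega>) \<le> K}) \<longlonglongrightarrow> 0"
  shows "AE \<omega> in M. \<forall>K. \<exists>n. K < (\<Sum>k\<le>n. Z k \<omega>)"
proof -
  have Z: "Z k \<in> borel_measurable M" for k
    using indep unfolding indep_vars_def by auto
  have "AE \<omega> in M. \<exists>n. real K < (\<Sum>k\<le>n. Z k \<omega>)" for K :: nat
  proof (rule AE_I')
    let ?N = "{\<omega>\<in>space M. \<forall>n. (\<Sum>k\<le>n. Z k \<omega>) \<le> real K}"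
    have "?N \<in> events"
      using Z by measurable
    have "prob ?N \<le> prob {\<omega>\<in>space M. (\<Sum>k\<le>n. Z k \<omega>) \<le> real K}" for n
      using Z by (intro finite_measure_mono) auto
    then have "prob ?N \<le> 0"
      by (intro LIMSEQ_le_const[OF tendsto]) auto
    then show "?N \<in> null_sets M"
      using \<open>?N \<in> events\<close> measure_nonneg[of M ?N] by (simp add: null_setsI emeasure_eq_measure)
  qed (auto simp: not_less)
  then have "AE \<omega> in M. \<forall>K::nat. \<exists>n. real K < (\<Sum>k\<le>n. Z k \<omega>)"
    by (simp add: AE_all_countable)
  then show ?thesis
    by eventually_elim (meson reals_Archimedean2 order.strict_trans)
qed

lemma AE_pos_if_prob_le_zero:
  fixes Z :: "'a \<Rightarrow> real"
  assumes "Z \<in> borel_measurable M" and "prob {\<omega>\<in>space M. Z \<omega> \<le> 0} = 0"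
  shows "AE \<omega> in M. 0 < Z \<omega>"
proof (rule AE_I')
  show "{\<omega>\<in>space M. Z \<omega> \<le> 0} \<in> null_sets M"
    using assms by (simp add: null_setsI emeasure_eq_measure)
qed auto

lemma cdf_distr:
  fixes Z :: "'a \<Rightarrow> real"
  assumes "Z \<in> borel_measurable M"
  shows "cdf (distr M borel Z) y = prob {\<omega>\<in>space M. Z \<omega> \<le> y}"
  using assms by (simp add: cdf_def measure_distr vimage_def Int_def conj_commute)

lemma exists_prob_le_less_one:
  fixes Z :: "'a \<Rightarrow> real"
  assumes Z: "Z \<in> borel_measurable M" and "prob {\<omega>\<in>space M. Z \<omega> \<le> 0} = 0"
  shows "\<exists>\<delta>>0. prob {\<omega>\<in>space M. Z \<omega> \<le> \<delta>} < 1"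
proof -
  interpret D: real_distribution "distr M borel Z"
    using Z by simp
  have "((cdf (distr M borel Z)) \<longlongrightarrow> 0) (at_right 0)"
    using D.cdf_is_right_cont[of 0] assms(2) by (simp add: continuous_within cdf_distr[OF Z])
  then have "\<forall>\<^sub>F y in at_right 0. cdf (distr M borel Z) y < 1"
    by (rule order_tendstoD) simp
  then obtain b where "0 < b" and "\<forall>y>0. y < b \<longrightarrow> cdf (distr M borel Z) y < 1"
    unfolding eventually_at_right_field by blast
  then have "0 < b / 2" and "prob {\<omega>\<in>space M. Z \<omega> \<le> b / 2} < 1"
    unfolding cdf_distr[OF Z, symmetric] by simp_all
  then show ?thesis
    by blast
qed

lemma prob_greater_tendsto_zero:
  fixes Z :: "'a \<Rightarrow> real"
  assumes Z: "Z \<in> borel_measurable M"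
  shows "(\<lambda>m. prob {\<omega>\<in>space M. real m < Z \<omega>}) \<longlonglongrightarrow> 0"
proof -
  interpret D: real_distribution "distr M borel Z"
    using Z by simp
  have "{\<omega>\<in>space M. real m < Z \<omega>} = space M - {\<omega>\<in>space M. Z \<omega> \<le> real m}" for m
    by auto
  then have "prob {\<omega>\<in>space M. real m < Z \<omega>} = 1 - cdf (distr M borel Z) (real m)" for m
    using Z by (simp add: prob_compl cdf_distr)
  then show ?thesis
    using tendsto_diff[OF tendsto_const D.cdf_lim_infty_prob, of 1] by simp
qed

lemma iid_positive_partial_sums:
  fixes Z :: "nat \<Rightarrow> 'a \<Rightarrow> real"
  assumes indep: "indep_vars (\<lambda>_. borel) Z UNIV"
    and cdf: "\<And>k y. prob {\<omega>\<in>space M. Z k \<omega> \<le> y} = F y" and "F 0 = 0"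
  shows "AE \<omega> in M. \<forall>k. 0 < Z k \<omega>"
    and "(\<lambda>n. prob {\<omega>\<in>space M. (\<Sum>k\<le>n. Z k \<omega>) \<le> K}) \<longlonglongrightarrow> 0"
    and "AE \<omega> in M. \<forall>K. \<exists>n. K < (\<Sum>k\<le>n. Z k \<omega>)"
proof -
  have Z: "Z k \<in> borel_measurable M" for k
    using indep unfolding indep_vars_def by auto
  have pos: "AE \<omega> in M. 0 < Z k \<omega>" for k
    using AE_pos_if_prob_le_zero[OF Z] cdf \<open>F 0 = 0\<close> by simp
  then show "AE \<omega> in M. \<forall>k. 0 < Z k \<omega>"
    by (simp add: AE_all_countable)
  obtain \<delta> where "0 < \<delta>" and "F \<delta> < 1"
    using exists_prob_le_less_one[OF Z] cdf \<open>F 0 = 0\<close> by metis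
  have nonneg: "AE \<omega> in M. 0 \<le> Z k \<omega>" for k
    using pos[of k] by eventually_elim simp
  have "(\<lambda>n. prob {\<omega>\<in>space M. (\<Sum>k\<le>n. Z k \<omega>) \<le> K}) \<longlonglongrightarrow> 0" for K
    using prob_partial_sum_le_tendsto_zero[OF indep nonneg _ \<open>0 < \<delta>\<close> \<open>F \<delta> < 1\<close>] cdf by simp
  then show "(\<lambda>n. prob {\<omega>\<in>space M. (\<Sum>k\<le>n. Z k \<omega>) \<le> K}) \<longlonglongrightarrow> 0"
    and "AE \<omega> in M. \<forall>K. \<exists>n. K < (\<Sum>k\<le>n. Z k \<omega>)"
    using AE_partial_sums_unbounded[OF indep] by blast+
qed

lemma prob_exponential_le:
  assumes "distributed M lborel X (exponential_density l)" and "0 < l"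
  shows "prob {\<omega>\<in>space M. X \<omega> \<le> a} = (if a < 0 then 0 else 1 - exp (- a * l))"
proof (cases "a < 0")
  case True
  have "X \<in> borel_measurable M"
    using distributed_measurable[OF assms(1)] by simp
  then have "prob {\<omega>\<in>space M. X \<omega> \<le> a} \<le> prob {\<omega>\<in>space M. X \<omega> \<le> 0}"
    using True by (intro finite_measure_mono) auto
  also have "\<dots> = 0"
    using exponential_distributedD_le[OF assms(1) order_refl \<open>0 < l\<close>] by simp
  finally show ?thesis
    using True measure_nonneg[of M] by (simp add: order_antisym)
qed (use exponential_distributedD_le[OF assms(1) _ \<open>0 < l\<close>] in simp)

end

section \<open>Sample paths of the shot-noise Cox model\<close>

lemma arr_mono:
  assumes "\<And>k. 0 \<le> E k \<omega>" and "k \<le> k'"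
  shows "arr E k \<omega> \<le> arr E k' \<omega>"
  unfolding arr_def using assms by (intro sum_mono2) auto

lemma arr_nonneg: "(\<And>k. 0 \<le> E k \<omega>) \<Longrightarrow> 0 \<le> arr E k \<omega>"
  unfolding arr_def by (intro sum_nonneg) auto

locale shot_noise_path =
  fixes llow d l0 :: real and E Y :: "nat \<Rightarrow> 'a \<Rightarrow> real" and \<omega> :: 'a
  assumes d_pos: "0 < d" and llow_nonneg: "0 \<le> llow" and l0_ge: "llow \<le> l0"
    and E_nonneg: "\<And>k. 0 \<le> E k \<omega>" and Y_nonneg: "\<And>k. 0 \<le> Y k \<omega>"
    and arr_E_unbounded: "\<And>K. \<exists>n. K < arr E n \<omega>"
    and Y_sums_unbounded: "\<And>K. \<exists>n. K < (\<Sum>k\<le>n. Y k \<omega>)"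
begin

abbreviation "lam s \<equiv> intensity llow d E Y l0 s \<omega>"
abbreviation "cum_lam t \<equiv> Lam llow d E Y l0 t \<omega>"

definition shot :: "nat \<Rightarrow> real \<Rightarrow> real" where
  "shot k s = (if arr E k \<omega> \<le> s then Y k \<omega> * exp (- d * (s - arr E k \<omega>)) else 0)"

lemma finite_arrivals_before: "\<exists>n. \<forall>s\<le>T. {k. arr E k \<omega> \<le> s} \<subseteq> {..n}"
proof -
  obtain n where "T < arr E n \<omega>"
    using arr_E_unbounded by blast
  moreover have "arr E n \<omega> \<le> arr E k \<omega>" if "n \<le> k" for k
    using arr_mono[of E \<omega>, OF E_nonneg that] .
  ultimately have "k \<le> n" if "arr E k \<omega> \<le> s" and "s \<le> T" for k s
    using that by (meson le_cases order.trans not_less)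
  then show ?thesis
    by blast
qed

lemma intensity_eq_shots:
  assumes "{k. arr E k \<omega> \<le> s} \<subseteq> {..n}"
  shows "lam s = llow + exp (- d * s) * (l0 - llow) + (\<Sum>k\<le>n. shot k s)"
proof -
  have "{k. arr E k \<omega> \<le> s} = {k\<in>{..n}. arr E k \<omega> \<le> s}"
    using assms by auto
  then have "(\<Sum>k\<in>{k. arr E k \<omega> \<le> s}. Y k \<omega> * exp (- d * (s - arr E k \<omega>))) = (\<Sum>k\<le>n. shot k s)"
    unfolding shot_def by (simp add: sum.inter_filter[symmetric])
  then show ?thesis
    unfolding intensity_def by simp
qed

lemma shot_nonneg: "0 \<le> shot k s"
  unfolding shot_def using Y_nonneg by simp

lemma shots_le_intensity: "(\<Sum>k\<le>n. shot k s) \<le> lam s"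
proof -
  obtain N where N: "{k. arr E k \<omega> \<le> s} \<subseteq> {..N}"
    using finite_arrivals_before[of s] by blast
  then have "lam s = llow + exp (- d * s) * (l0 - llow) + (\<Sum>k\<le>max n N. shot k s)"
    by (intro intensity_eq_shots) auto
  moreover have "(\<Sum>k\<le>n. shot k s) \<le> (\<Sum>k\<le>max n N. shot k s)"
    by (intro sum_mono2 shot_nonneg) auto
  moreover have "0 \<le> exp (- d * s) * (l0 - llow)"
    using l0_ge by simp
  ultimately show ?thesis
    using llow_nonneg by linarith
qed

lemma intensity_ge: "llow + exp (- d * s) * (l0 - llow) \<le> lam s"
  unfolding intensity_def using Y_nonneg by (simp add: sum_nonneg)

lemma shot_integrable: "shot k integrable_on {0..T}"
proof -
  have "{arr E k \<omega>..} \<inter> {0..T} = {max 0 (arr E k \<omega>)..T}"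
    by auto
  then have "(\<lambda>s. Y k \<omega> * exp (- d * (s - arr E k \<omega>))) integrable_on ({arr E k \<omega>..} \<inter> {0..T})"
    by (simp add: integrable_continuous_interval continuous_intros)
  then show ?thesis
    unfolding shot_def[abs_def] atLeast_iff[symmetric] by (simp only: integrable_restrict_Int)
qed

lemma intensity_integrable: "lam integrable_on {0..T}"
proof -
  obtain n where n: "\<forall>s\<le>T. {k. arr E k \<omega> \<le> s} \<subseteq> {..n}"
    using finite_arrivals_before by blast
  have "(\<lambda>s. llow + exp (- d * s) * (l0 - llow) + (\<Sum>k\<le>n. shot k s)) integrable_on {0..T}"
    by (intro integrable_add integrable_sum shot_integrable integrable_continuous_interval
        continuous_intros) auto
  then show ?thesis
    by (rule integrable_eq) (use n intensity_eq_shots in auto)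
qed

lemma intensity_bounded: "\<exists>B\<ge>0. \<forall>s\<in>{0..T}. lam s \<le> B"
proof -
  obtain n where n: "\<forall>s\<le>T. {k. arr E k \<omega> \<le> s} \<subseteq> {..n}"
    using finite_arrivals_before by blast
  define B where "B = l0 + (\<Sum>k\<le>n. Y k \<omega>)"
  have "lam s \<le> B" if "s \<in> {0..T}" for s
  proof -
    have "exp (- d * s) * (l0 - llow) \<le> l0 - llow"
      using that d_pos l0_ge by (intro mult_left_le_one_le) auto
    moreover have "shot k s \<le> Y k \<omega>" for k
      unfolding shot_def using Y_nonneg[of k] d_pos by (auto intro: mult_left_le)
    then have "(\<Sum>k\<le>n. shot k s) \<le> (\<Sum>k\<le>n. Y k \<omega>)"
      by (intro sum_mono)
    ultimately show ?thesis
      using intensity_eq_shots[of s n] n that unfolding B_def by auto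
  qed
  moreover have "0 \<le> B"
    unfolding B_def using Y_nonneg l0_ge llow_nonneg by (simp add: sum_nonneg)
  ultimately show ?thesis
    by blast
qed

lemma Lam_le_linear: "\<exists>B\<ge>0. \<forall>t\<in>{0..T}. cum_lam t \<le> t * B"
proof -
  obtain B where "0 \<le> B" and B: "\<forall>s\<in>{0..T}. lam s \<le> B"
    using intensity_bounded by blast
  have "cum_lam t \<le> t * B" if "t \<in> {0..T}" for t
  proof -
    have "cum_lam t \<le> integral {0..t} (\<lambda>_. B)"
      unfolding Lam_def using B that
      by (intro integral_le intensity_integrable) auto
    then show ?thesis
      using that by simp
  qed
  then show ?thesis
    using \<open>0 \<le> B\<close> by blast
qed

lemma Lam_ge:
  assumes "0 \<le> t"
  shows "t * (exp (- d * t) * (l0 - llow)) \<le> cum_lam t"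
proof -
  have "exp (- d * t) * (l0 - llow) \<le> lam s" if "s \<in> {0..t}" for s
  proof -
    have "exp (- d * t) \<le> exp (- d * s)"
      using that d_pos by (simp add: mult_left_mono)
    then have "exp (- d * t) * (l0 - llow) \<le> exp (- d * s) * (l0 - llow)"
      using l0_ge by (intro mult_right_mono) auto
    then show ?thesis
      using intensity_ge[of s] llow_nonneg by linarith
  qed
  then have "integral {0..t} (\<lambda>_. exp (- d * t) * (l0 - llow)) \<le> cum_lam t"
    unfolding Lam_def by (intro integral_le intensity_integrable) auto
  then show ?thesis
    using assms by (simp add: mult_ac)
qed

(* Each shot contributes at least Y_k e^(-d) to the intensity during the unit time interval
   after its arrival. *)
lemma shot_sum_le_Lam:
  assumes "arr E n \<omega> + 1 \<le> T"
  shows "(\<Sum>k\<le>n. Y k \<omega>) * exp (- d) \<le> cum_lam T"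
proof -
  define bump where "bump k s = Y k \<omega> * exp (- d) * indicator {arr E k \<omega>..arr E k \<omega> + 1} s" for k s
  have bump_le: "bump k s \<le> shot k s" for k s
  proof (cases "s \<in> {arr E k \<omega>..arr E k \<omega> + 1}")
    case True
    then have "exp (- d) \<le> exp (- d * (s - arr E k \<omega>))"
      using d_pos by (simp add: mult_left_le)
    then show ?thesis
      using True Y_nonneg[of k] by (simp add: bump_def shot_def mult_left_mono)
  qed (simp add: bump_def shot_nonneg)
  have bump_integral: "(bump k has_integral Y k \<omega> * exp (- d)) {0..T}" if "k \<le> n" for k
  proof -
    have "0 \<le> arr E k \<omega>" and "arr E k \<omega> \<le> arr E n \<omega>"
      using arr_nonneg[of E \<omega>, OF E_nonneg] arr_mono[of E \<omega>, OF E_nonneg that] by auto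
    then have "{arr E k \<omega>..arr E k \<omega> + 1} \<inter> {0..T} = {arr E k \<omega>..arr E k \<omega> + 1}"
      using assms by auto
    moreover have "bump k = (\<lambda>s. if s \<in> {arr E k \<omega>..arr E k \<omega> + 1} then Y k \<omega> * exp (- d) else 0)"
      by (auto simp: bump_def indicator_def)
    ultimately show ?thesis
      using has_integral_const_real[of "Y k \<omega> * exp (- d)" "arr E k \<omega>" "arr E k \<omega> + 1"]
      by (simp only: has_integral_restrict_Int) simp
  qed
  have "((\<lambda>s. \<Sum>k\<le>n. bump k s) has_integral (\<Sum>k\<le>n. Y k \<omega> * exp (- d))) {0..T}"
    by (intro has_integral_sum bump_integral) auto
  moreover have "(\<Sum>k\<le>n. bump k s) \<le> lam s" for s
    using sum_mono[OF bump_le] shots_le_intensity by (rule order_trans)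
  ultimately have "(\<Sum>k\<le>n. Y k \<omega> * exp (- d)) \<le> cum_lam T"
    unfolding Lam_def by (intro has_integral_le[OF _ integrable_integral[OF intensity_integrable]])
  then show ?thesis
    by (simp add: sum_distrib_right)
qed

lemma Lam_unbounded: "\<exists>t\<ge>0. K \<le> cum_lam t"
proof -
  obtain n where n: "K * exp d < (\<Sum>k\<le>n. Y k \<omega>)"
    using Y_sums_unbounded by blast
  have "K = K * exp d * exp (- d)"
    by (simp add: mult.assoc exp_minus_inverse)
  also have "\<dots> \<le> (\<Sum>k\<le>n. Y k \<omega>) * exp (- d)"
    using n by (intro mult_right_mono) auto
  also have "\<dots> \<le> cum_lam (arr E n \<omega> + 1)"
    by (rule shot_sum_le_Lam) simp
  finally show ?thesis
    using arr_nonneg[of E \<omega>, OF E_nonneg, of n] by (intro exI[of _ "arr E n \<omega> + 1"]) simp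
qed

end

locale cox_path = shot_noise_path +
  fixes G U :: "nat \<Rightarrow> 'a \<Rightarrow> real"
  assumes G_pos: "\<And>k. 0 < G k \<omega>" and arr_G_unbounded: "\<And>K. \<exists>n. K < arr G n \<omega>"
    and U_nonneg: "\<And>k. 0 \<le> U k \<omega>"
begin

abbreviation "claim j \<equiv> claimtime llow d E Y G l0 j \<omega>"

lemma G_nonneg: "0 \<le> G k \<omega>"
  using G_pos less_imp_le by blast

(* Otherwise claimtime would be the unspecified value Inf {}. *)
lemma claim_set_nonempty: "{t. 0 \<le> t \<and> arr G j \<omega> \<le> cum_lam t} \<noteq> {}"
  using Lam_unbounded[of "arr G j \<omega>"] by auto

lemma claimtime_le:
  assumes "0 \<le> t" and "arr G n \<omega> \<le> cum_lam t" and "j \<le> n"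
  shows "claim j \<le> t"
  unfolding claimtime_def
proof (rule cInf_lower)
  show "t \<in> {t. 0 \<le> t \<and> arr G j \<omega> \<le> cum_lam t}"
    using arr_mono[of G \<omega>, OF G_nonneg \<open>j \<le> n\<close>] assms(1,2) by simp
qed (rule bdd_belowI[of _ 0], simp)

lemma claimtimes_bounded_below: "\<exists>\<eta>>0. \<forall>j. \<eta> \<le> claim j"
proof -
  obtain B where "0 \<le> B" and B: "\<forall>t\<in>{0..1}. cum_lam t \<le> t * B"
    using Lam_le_linear by blast
  define \<eta> where "\<eta> = min 1 (G 0 \<omega> / (B + 1))"
  have "\<eta> \<le> t" if "0 \<le> t" and t: "arr G j \<omega> \<le> cum_lam t" for j t
  proof (cases "1 \<le> t")
    case False
    have "G 0 \<omega> \<le> arr G j \<omega>"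
      using arr_mono[of G \<omega>, OF G_nonneg, of 0 j] by (simp add: arr_def)
    also have "\<dots> \<le> t * B"
      using t B[rule_format, of t] \<open>0 \<le> t\<close> False by simp
    also have "\<dots> \<le> t * (B + 1)"
      using \<open>0 \<le> t\<close> by (simp add: mult_left_mono)
    finally have "G 0 \<omega> / (B + 1) \<le> t"
      using \<open>0 \<le> B\<close> by (subst pos_divide_le_eq) auto
    then show ?thesis
      unfolding \<eta>_def by simp
  qed (simp add: \<eta>_def)
  then have "\<eta> \<le> claim j" for j
    unfolding claimtime_def by (intro cInf_greatest claim_set_nonempty) auto
  moreover have "0 < \<eta>"
    unfolding \<eta>_def using G_pos \<open>0 \<le> B\<close> by simp
  ultimately show ?thesis
    by blast
qed

lemma finite_claims: "finite {j. claim j \<le> t}"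
proof -
  obtain B where "0 \<le> B" and B: "\<forall>s\<in>{0..t + 1}. cum_lam s \<le> s * B"
    using Lam_le_linear by blast
  obtain n where n: "(t + 1) * B < arr G n \<omega>"
    using arr_G_unbounded by blast
  have "j < n" if "claim j \<le> t" for j
  proof -
    have "Inf {t. 0 \<le> t \<and> arr G j \<omega> \<le> cum_lam t} < t + 1"
      using that unfolding claimtime_def by simp
    then obtain s where s: "0 \<le> s" "arr G j \<omega> \<le> cum_lam s" "s < t + 1"
      using cInf_less_iff[OF claim_set_nonempty, of j] bdd_belowI[of _ 0] by force
    have "cum_lam s \<le> s * B"
      using B s by simp
    also have "\<dots> \<le> (t + 1) * B"
      using s \<open>0 \<le> B\<close> by (simp add: mult_right_mono)
    finally have "arr G j \<omega> < arr G n \<omega>"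
      using s(2) n by linarith
    show ?thesis
    proof (rule ccontr)
      assume "\<not> j < n"
      then have "arr G n \<omega> \<le> arr G j \<omega>"
        by (intro arr_mono[of G \<omega>, OF G_nonneg]) simp
      then show False
        using \<open>arr G j \<omega> < arr G n \<omega>\<close> by simp
    qed
  qed
  then have "{j. claim j \<le> t} \<subseteq> {..<n}"
    by blast
  then show ?thesis
    by (rule finite_subset) simp
qed

lemma surplus_le: "surplus llow d E Y G U p x l0 t \<omega> \<le> x + p * t"
  unfolding surplus_def using U_nonneg by (simp add: sum_nonneg)

lemma surplus_initially_linear: "\<exists>\<eta>>0. \<forall>t<\<eta>. surplus llow d E Y G U p x l0 t \<omega> = x + p * t"
proof -
  obtain \<eta> where "0 < \<eta>" and \<eta>: "\<forall>j. \<eta> \<le> claim j"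
    using claimtimes_bounded_below by blast
  have "{j. claim j \<le> t} = {}" if "t < \<eta>" for t
    using \<eta> that by (auto simp: not_le intro: order.strict_trans2)
  then show ?thesis
    using \<open>0 < \<eta>\<close> unfolding surplus_def by auto
qed

lemma claims_le_if_surplus_nonneg:
  assumes "0 \<le> t" and "arr G n \<omega> \<le> cum_lam t" and "0 \<le> surplus llow d E Y G U p x l0 t \<omega>"
  shows "(\<Sum>j\<le>n. U j \<omega>) \<le> x + p * t"
proof -
  have "(\<Sum>j\<le>n. U j \<omega>) \<le> (\<Sum>j\<in>{j. claim j \<le> t}. U j \<omega>)"
    using claimtime_le[OF assms(1,2)] by (intro sum_mono2 finite_claims U_nonneg) auto
  then show ?thesis
    using assms(3) unfolding surplus_def by simp
qed

end

section \<open>The value function for large initial intensity\<close>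

lemma tendsto_ennreal_squeeze:
  fixes f :: "'b \<Rightarrow> ennreal"
  assumes lower: "\<forall>\<^sub>F y in F. ennreal x \<le> f y"
    and upper: "\<And>e. 0 < e \<Longrightarrow> \<forall>\<^sub>F y in F. f y \<le> ennreal (x + e)" and "0 \<le> x"
  shows "(f \<longlongrightarrow> ennreal x) F"
proof (rule order_tendstoI)
  fix a assume "a < ennreal x"
  with lower show "\<forall>\<^sub>F y in F. a < f y"
    by (auto elim: eventually_mono intro: order.strict_trans2)
next
  fix a assume "ennreal x < a"
  then obtain e where "0 < e" and "ennreal (x + e) < a"
  proof (cases a)
    case (real r)
    with \<open>ennreal x < a\<close> \<open>0 \<le> x\<close> have "x < r"
      by (simp add: ennreal_less_iff)
    moreover from this \<open>0 \<le> x\<close> have "ennreal (x + (r - x) / 2) < ennreal r"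
      by (intro ennreal_lessI) (auto simp: field_simps)
    ultimately show thesis
      using real by (intro that[of "(r - x) / 2"]) auto
  qed (intro that[of 1], simp_all)
  with upper[of e] show "\<forall>\<^sub>F y in F. f y < a"
    by (auto elim: eventually_mono intro: order.strict_trans1)
qed

definition regular_path :: "(nat \<Rightarrow> 'a \<Rightarrow> real) \<Rightarrow> (nat \<Rightarrow> 'a \<Rightarrow> real) \<Rightarrow> (nat \<Rightarrow> 'a \<Rightarrow> real)
    \<Rightarrow> (nat \<Rightarrow> 'a \<Rightarrow> real) \<Rightarrow> 'a \<Rightarrow> bool" where
  "regular_path E Y G U \<omega> \<longleftrightarrow>
     (\<forall>k. 0 \<le> E k \<omega> \<and> 0 \<le> Y k \<omega> \<and> 0 < G k \<omega> \<and> 0 \<le> U k \<omega>)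
     \<and> (\<forall>K. \<exists>n. K < arr E n \<omega>) \<and> (\<forall>K. \<exists>n. K < (\<Sum>k\<le>n. Y k \<omega>)) \<and> (\<forall>K. \<exists>n. K < arr G n \<omega>)"

lemma cox_path_if_regular:
  assumes "regular_path E Y G U \<omega>" and "0 < d" and "0 \<le> llow" and "llow \<le> l0"
  shows "cox_path llow d l0 E Y \<omega> G U"
  using assms unfolding regular_path_def cox_path_def cox_path_axioms_def shot_noise_path_def
  by blast

locale cox_dividend_model = prob_space M for M :: "'a measure" +
  fixes q llow d :: real and E Y G U :: "nat \<Rightarrow> 'a \<Rightarrow> real" and p x :: real
  assumes q_pos: "0 < q" and d_pos: "0 < d" and llow_nonneg: "0 \<le> llow"
    and p_pos: "0 < p" and x_nonneg: "0 \<le> x"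
    and G_measurable: "\<And>k. G k \<in> borel_measurable M"
    and U_measurable: "\<And>k. U k \<in> borel_measurable M"
    and AE_regular_path: "AE \<omega> in M. regular_path E Y G U \<omega>"
    and claims_small_tendsto_zero: "\<And>K. (\<lambda>n. prob {\<omega>\<in>space M. (\<Sum>j\<le>n. U j \<omega>) \<le> K}) \<longlonglongrightarrow> 0"
begin

abbreviation "X l0 \<equiv> surplus llow d E Y G U p x l0"
abbreviation "V l0 \<equiv> Vfun M q llow d E Y G U p x l0"
abbreviation "admissible_for l0 L \<equiv> admissible M (\<lambda>t. completed M (nat_filt M llow d E Y G U l0 t)) (X l0) L"

lemma V_eq: "V l0 = (SUP L\<in>{L. admissible_for l0 L}. Jval M q (X l0) L)"
  unfolding Vfun_def ..

(* The lump sum is paid only on regular paths: on the null set of irregular paths a claim may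
   occur at time 0, and paying x there need not be admissible. *)
lemma x_le_V:
  assumes "llow \<le> l0"
  shows "ennreal x \<le> V l0"
proof -
  obtain N where N: "N \<in> null_sets M" and "{\<omega>\<in>space M. \<not> regular_path E Y G U \<omega>} \<subseteq> N"
    using AE_regular_path unfolding eventually_ae_filter by blast
  define A where "A = space M - N"
  then have regular: "regular_path E Y G U \<omega>" if "\<omega> \<in> A" for \<omega>
    using that \<open>{\<omega>\<in>space M. \<not> regular_path E Y G U \<omega>} \<subseteq> N\<close> by blast
  have "A \<in> sets M" and "space M - A \<in> null_sets M"
    using N null_sets.sets_into_space[OF N] by (auto simp: A_def Diff_Diff_Int Int_absorb1)
  have initial: "\<exists>\<eta>>0. \<forall>t<\<eta>. X l0 t \<omega> = x + p * t" if "\<omega> \<in> A" for \<omega>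
    using cox_path.surplus_initially_linear[OF cox_path_if_regular[OF regular[OF that] d_pos llow_nonneg assms]] .
  define L where "L = (\<lambda>(t::real) \<omega>. if \<omega> \<in> A then x else 0)"
  have "x \<le> X l0 0 \<omega>" if "\<omega> \<in> A" for \<omega>
    using initial[OF that] by force
  then have adm: "admissible_for l0 L"
    unfolding nat_filt_def L_def by (rule admissible_lump_sum[OF \<open>A \<in> sets M\<close> \<open>space M - A \<in> null_sets M\<close> x_nonneg])
  have lump_sum_paid: "ennreal x \<le> disc_div q L (ruin_time (X l0) L \<omega>) \<omega>" if \<omega>: "\<omega> \<in> A" for \<omega>
  proof (rule disc_div_const_ge)
    obtain \<eta> where "0 < \<eta>" and \<eta>: "\<forall>t<\<eta>. X l0 t \<omega> = x + p * t"
      using initial[OF \<omega>] by blast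
    have "ereal \<eta> \<le> ruin_time (X l0) L \<omega>"
      unfolding L_def using \<eta> \<omega> p_pos x_nonneg by (intro le_ruin_timeI) (simp add: Lminus_const)
    then show "0 < ruin_time (X l0) L \<omega>"
      using \<open>0 < \<eta>\<close> order.strict_trans2[of "ereal 0" "ereal \<eta>"] by (simp add: zero_ereal_def)
  qed (use \<omega> x_nonneg in \<open>simp_all add: L_def\<close>)
  have "AE \<omega> in M. ennreal x \<le> disc_div q L (ruin_time (X l0) L \<omega>) \<omega>"
    using AE_not_in[OF N] AE_space by eventually_elim (simp add: A_def lump_sum_paid)
  then have "(\<integral>\<^sup>+\<omega>. ennreal x \<partial>M) \<le> Jval M q (X l0) L"
    unfolding Jval_def by (rule nn_integral_mono_AE)
  also have "\<dots> \<le> V l0"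
    unfolding V_eq using adm by (intro SUP_upper) simp
  finally show ?thesis
    by (simp add: emeasure_space_1)
qed

definition "dividend_cap = 2 * (x + 2 * p / q)"

definition "small_claims \<epsilon> n = {\<omega>\<in>space M. (\<Sum>j\<le>n. U j \<omega>) \<le> x + p * \<epsilon>}"

(* Since Lambda(eps) >= eps e^(-d eps) (l0 - llow), outside this event the claim with index n
   has arrived by time eps. *)
definition "late_claim l0 \<epsilon> n = {\<omega>\<in>space M. \<epsilon> * (exp (- d * \<epsilon>) * (l0 - llow)) < arr G n \<omega>}"

context
  fixes l0 :: real and L :: "real \<Rightarrow> 'a \<Rightarrow> real" and \<omega> :: 'a
  assumes regular: "regular_path E Y G U \<omega>" and \<omega>: "\<omega> \<in> space M"
    and "llow \<le> l0" and adm: "admissible_for l0 L"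
begin

interpretation cox_path llow d l0 E Y \<omega> G U
  by (rule cox_path_if_regular[OF regular d_pos llow_nonneg \<open>llow \<le> l0\<close>])

lemma dividends_le_linear:
  assumes "0 \<le> t" and "ereal t < ruin_time (X l0) L \<omega>"
  shows "L t \<omega> \<le> x + p * t"
  using admissibleD(4)[OF adm \<omega> assms] surplus_le[of p x t] by linarith

lemma survival_imp_claims_event:
  assumes "0 < \<epsilon>" and "ereal \<epsilon> < ruin_time (X l0) L \<omega>"
  shows "\<omega> \<in> small_claims \<epsilon> n \<union> late_claim l0 \<epsilon> n"
proof (rule UnCI)
  assume "\<omega> \<notin> late_claim l0 \<epsilon> n"
  then have "arr G n \<omega> \<le> \<epsilon> * (exp (- d * \<epsilon>) * (l0 - llow))"
    using \<omega> by (simp add: late_claim_def not_less)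
  also have "\<dots> \<le> cum_lam \<epsilon>"
    using \<open>0 < \<epsilon>\<close> by (intro Lam_ge) simp
  finally have "arr G n \<omega> \<le> cum_lam \<epsilon>" .
  moreover have "0 \<le> L 0 \<omega>" and "L 0 \<omega> \<le> L \<epsilon> \<omega>" and "L \<epsilon> \<omega> \<le> X l0 \<epsilon> \<omega>"
    using admissibleD[OF adm \<omega>] assms by simp_all
  then have "0 \<le> X l0 \<epsilon> \<omega>"
    by linarith
  ultimately have "(\<Sum>j\<le>n. U j \<omega>) \<le> x + p * \<epsilon>"
    using \<open>0 < \<epsilon>\<close> by (intro claims_le_if_surplus_nonneg) auto
  then show "\<omega> \<in> small_claims \<epsilon> n"
    using \<omega> by (simp add: small_claims_def)
qed

lemma disc_div_le_pathwise:
  assumes "0 < \<epsilon>"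
  shows "disc_div q L (ruin_time (X l0) L \<omega>) \<omega> \<le> ennreal (x + p * \<epsilon>)
    + ennreal dividend_cap * (indicator (small_claims \<epsilon> n) \<omega> + indicator (late_claim l0 \<epsilon> n) \<omega>)"
proof (cases "ereal \<epsilon> < ruin_time (X l0) L \<omega>")
  case False
  have "L t \<omega> \<le> x + p * \<epsilon>" if "0 \<le> t" and "ereal t < ruin_time (X l0) L \<omega>" for t
  proof -
    have "t \<le> \<epsilon>"
      using that False by (metis ereal_less_eq(3) less_imp_le not_less order.strict_trans2)
    then show ?thesis
      using dividends_le_linear[OF that] p_pos by (smt (verit) mult_left_mono)
  qed
  then have "disc_div q L (ruin_time (X l0) L \<omega>) \<omega> \<le> ennreal (x + p * \<epsilon>)"
    using False x_nonneg p_pos \<open>0 < \<epsilon>\<close> q_pos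
    by (intro disc_div_le[of L \<omega>, OF admissibleD(1-3)[OF adm \<omega>]]) auto
  then show ?thesis
    by (rule add_increasing2[rotated]) simp
next
  case True
  have "disc_div q L (ruin_time (X l0) L \<omega>) \<omega> \<le> ennreal dividend_cap"
    unfolding dividend_cap_def using x_nonneg p_pos q_pos dividends_le_linear
    by (intro disc_div_le_geometric[of L \<omega>, OF admissibleD(1-3)[OF adm \<omega>]]) auto
  moreover have "1 \<le> indicator (small_claims \<epsilon> n) \<omega> + (indicator (late_claim l0 \<epsilon> n) \<omega> :: ennreal)"
    using survival_imp_claims_event[OF \<open>0 < \<epsilon>\<close> True] by (auto simp: indicator_def)
  ultimately have "disc_div q L (ruin_time (X l0) L \<omega>) \<omega>
      \<le> ennreal dividend_cap * (indicator (small_claims \<epsilon> n) \<omega> + indicator (late_claim l0 \<epsilon> n) \<omega>)"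
    by (metis mult.right_neutral mult_left_mono order_trans zero_le)
  then show ?thesis
    by (rule add_increasing[rotated]) simp
qed

end

lemma V_le:
  assumes "llow \<le> l0" and "0 < \<epsilon>"
  shows "V l0 \<le> ennreal (x + p * \<epsilon> + dividend_cap * (prob (small_claims \<epsilon> n) + prob (late_claim l0 \<epsilon> n)))"
  unfolding V_eq
proof (rule SUP_least)
  fix L assume "L \<in> {L. admissible_for l0 L}"
  have B1: "small_claims \<epsilon> n \<in> events" and B2: "late_claim l0 \<epsilon> n \<in> events"
    unfolding small_claims_def late_claim_def arr_def using U_measurable G_measurable by measurable
  have "0 \<le> dividend_cap"
    unfolding dividend_cap_def using x_nonneg p_pos q_pos by simp
  have "AE \<omega> in M. disc_div q L (ruin_time (X l0) L \<omega>) \<omega> \<le> ennreal (x + p * \<epsilon>)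
    + ennreal dividend_cap * (indicator (small_claims \<epsilon> n) \<omega> + indicator (late_claim l0 \<epsilon> n) \<omega>)"
    using AE_regular_path AE_space
  proof eventually_elim
    case (elim \<omega>)
    then show ?case
      using \<open>L \<in> {L. admissible_for l0 L}\<close> assms by (intro disc_div_le_pathwise) auto
  qed
  then have "Jval M q (X l0) L \<le> (\<integral>\<^sup>+\<omega>. ennreal (x + p * \<epsilon>)
    + ennreal dividend_cap * (indicator (small_claims \<epsilon> n) \<omega> + indicator (late_claim l0 \<epsilon> n) \<omega>) \<partial>M)"
    unfolding Jval_def by (rule nn_integral_mono_AE)
  also have "\<dots> = ennreal (x + p * \<epsilon>)
      + ennreal dividend_cap * (emeasure M (small_claims \<epsilon> n) + emeasure M (late_claim l0 \<epsilon> n))"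
    using B1 B2 by (simp add: nn_integral_add nn_integral_cmult emeasure_space_1)
  also have "\<dots> = ennreal (x + p * \<epsilon> + dividend_cap * (prob (small_claims \<epsilon> n) + prob (late_claim l0 \<epsilon> n)))"
    using x_nonneg p_pos \<open>0 < \<epsilon>\<close> \<open>0 \<le> dividend_cap\<close>
    by (simp add: emeasure_eq_measure ennreal_plus[symmetric] ennreal_mult[symmetric] del: ennreal_plus)
  finally show "Jval M q (X l0) L \<le> ennreal (x + p * \<epsilon> + dividend_cap * (prob (small_claims \<epsilon> n) + prob (late_claim l0 \<epsilon> n)))" .
qed

lemma prob_late_claim_le:
  assumes "0 < \<epsilon>" and "llow + real m / (\<epsilon> * exp (- d * \<epsilon>)) \<le> l0"
  shows "prob (late_claim l0 \<epsilon> n) \<le> prob {\<omega>\<in>space M. real m < arr G n \<omega>}"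
proof (rule finite_measure_mono)
  have "real m \<le> \<epsilon> * exp (- d * \<epsilon>) * (l0 - llow)"
    using assms by (simp add: field_simps)
  then show "late_claim l0 \<epsilon> n \<subseteq> {\<omega>\<in>space M. real m < arr G n \<omega>}"
    by (auto simp: late_claim_def mult.assoc)
  show "{\<omega>\<in>space M. real m < arr G n \<omega>} \<in> events"
    unfolding arr_def using G_measurable by measurable
qed

lemma eventually_V_le:
  assumes "0 < e"
  shows "\<forall>\<^sub>F l0 in at_top. V l0 \<le> ennreal (x + e)"
proof -
  define \<epsilon> where "\<epsilon> = e / (4 * p)"
  have "0 < \<epsilon>" and p_\<epsilon>: "p * \<epsilon> = e / 4"
    using \<open>0 < e\<close> p_pos by (simp_all add: \<epsilon>_def)
  have "0 \<le> dividend_cap"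
    unfolding dividend_cap_def using x_nonneg p_pos q_pos by simp
  have "(\<lambda>n. dividend_cap * prob (small_claims \<epsilon> n)) \<longlonglongrightarrow> 0"
    unfolding small_claims_def by (intro tendsto_mult_right_zero claims_small_tendsto_zero)
  then obtain n where n: "dividend_cap * prob (small_claims \<epsilon> n) < e / 4"
    using order_tendstoD(2)[of _ 0 sequentially "e / 4"] \<open>0 < e\<close> unfolding eventually_sequentially by force
  have "arr G n \<in> borel_measurable M"
    unfolding arr_def using G_measurable by measurable
  then have "(\<lambda>m. dividend_cap * prob {\<omega>\<in>space M. real m < arr G n \<omega>}) \<longlonglongrightarrow> 0"
    by (intro tendsto_mult_right_zero prob_greater_tendsto_zero)
  then obtain m where m: "dividend_cap * prob {\<omega>\<in>space M. real m < arr G n \<omega>} < e / 4"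
    using order_tendstoD(2)[of _ 0 sequentially "e / 4"] \<open>0 < e\<close> unfolding eventually_sequentially by force
  have "0 < \<epsilon> * exp (- d * \<epsilon>)"
    using \<open>0 < \<epsilon>\<close> by simp
  show ?thesis
    using eventually_ge_at_top[of "llow + real m / (\<epsilon> * exp (- d * \<epsilon>))"]
  proof eventually_elim
    case (elim l0)
    then have "dividend_cap * prob (late_claim l0 \<epsilon> n) < e / 4"
      using prob_late_claim_le[OF \<open>0 < \<epsilon>\<close>] m \<open>0 \<le> dividend_cap\<close> by (meson mult_left_mono order.strict_trans1)
    then have "x + p * \<epsilon> + dividend_cap * (prob (small_claims \<epsilon> n) + prob (late_claim l0 \<epsilon> n)) \<le> x + e"
      unfolding distrib_left using n p_\<epsilon> \<open>0 < e\<close> by linarith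
    moreover have "llow \<le> l0"
      using elim \<open>0 < \<epsilon> * exp (- d * \<epsilon>)\<close> by (smt (verit) divide_nonneg_pos of_nat_0_le_iff)
    ultimately show ?case
      using V_le[of l0 \<epsilon> n] \<open>0 < \<epsilon>\<close> by (meson ennreal_leI order_trans)
  qed
qed

lemma V_tendsto: "(V \<longlongrightarrow> ennreal x) at_top"
proof (rule tendsto_ennreal_squeeze[OF _ eventually_V_le x_nonneg])
  show "\<forall>\<^sub>F l0 in at_top. ennreal x \<le> V l0"
    using eventually_ge_at_top[of llow] by (rule eventually_mono) (rule x_le_V)
qed

end

lemma (in prob_space) indep_vars_prim_family:
  assumes "indep_vars (\<lambda>_. borel) (prim_family E Y G U) ({0..3} \<times> UNIV)"
  shows "indep_vars (\<lambda>_. borel) E UNIV" and "indep_vars (\<lambda>_. borel) Y UNIV"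
    and "indep_vars (\<lambda>_. borel) G UNIV" and "indep_vars (\<lambda>_. borel) U UNIV"
proof -
  have "indep_vars (\<lambda>_. borel) (\<lambda>k. prim_family E Y G U (i, k)) UNIV" if "i \<le> 3" for i
    using indep_vars_reindex[OF assms, of "Pair i" UNIV] that by (simp add: inj_on_def image_subset_iff)
  from this[of 0] this[of 1] this[of 2] this[of 3]
  show "indep_vars (\<lambda>_. borel) E UNIV" and "indep_vars (\<lambda>_. borel) Y UNIV"
    and "indep_vars (\<lambda>_. borel) G UNIV" and "indep_vars (\<lambda>_. borel) U UNIV"
    by (simp_all add: prim_family_def)
qed

theorem proposition3p7:
  fixes M :: "'a measure"
    and E Y G U :: "nat \<Rightarrow> 'a \<Rightarrow> real"
    and F_U F_Y :: "real \<Rightarrow> real"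
    and p q d \<beta> llow lav x :: real
  assumes "prob_space M"
    and "p > 0" and "q > 0" and "d > 0" and "\<beta> > 0" and "llow \<ge> 0"
    and "\<And>k. distributed M lborel (E k) (exponential_density \<beta>)"
    and "\<And>k. distributed M lborel (G k) (exponential_density 1)"
    and "\<And>k. Y k \<in> borel_measurable M" and "\<And>k. U k \<in> borel_measurable M"
    and "\<And>k y. measure M {\<omega>\<in>space M. Y k \<omega> \<le> y} = F_Y y"
    and "\<And>k u. measure M {\<omega>\<in>space M. U k \<omega> \<le> u} = F_U u"
    and "F_Y 0 = 0" and "F_U 0 = 0"
    and "integrable M (Y 0)" and "integrable M (U 0)"
    and "prob_space.indep_vars M (\<lambda>_. borel) (prim_family E Y G U) ({0..3} \<times> UNIV)"
    and "\<And>l0. l0 \<ge> llow \<Longrightarrow>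
           ((\<lambda>t. (\<integral>\<omega>. Lam llow d E Y l0 t \<omega> \<partial>M) / t) \<longlongrightarrow> lav) at_top"
    and "\<exists>\<eta>>0. p = (1 + \<eta>) * (\<integral>\<omega>. U 0 \<omega> \<partial>M) * lav"
    and "x \<ge> 0"
  shows "((\<lambda>l0. Vfun M q llow d E Y G U p x l0) \<longlongrightarrow> ennreal x) at_top"
proof -
  interpret prob_space M
    by (rule assms(1))
  note indep = indep_vars_prim_family[OF assms(17)]
  define F_exp where "F_exp l y = (if y < 0 then 0 else 1 - exp (- y * l))" for l y :: real
  have exp_cdf: "prob {\<omega>\<in>space M. E k \<omega> \<le> y} = F_exp \<beta> y" "prob {\<omega>\<in>space M. G k \<omega> \<le> y} = F_exp 1 y"
    for k y
    unfolding F_exp_def using prob_exponential_le assms(5,7,8) by auto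
  have "F_exp l 0 = 0" for l
    by (simp add: F_exp_def)
  note E = iid_positive_partial_sums[OF indep(1) exp_cdf(1) this]
    and G = iid_positive_partial_sums[OF indep(3) exp_cdf(2) this]
    and Y = iid_positive_partial_sums[OF indep(2) assms(11,13)]
    and U = iid_positive_partial_sums[OF indep(4) assms(12,14)]
  have "AE \<omega> in M. regular_path E Y G U \<omega>"
    using E(1,3) G(1,3) Y(1,3) U(1)
    by eventually_elim (auto simp: regular_path_def arr_def less_imp_le)
  moreover have "G k \<in> borel_measurable M" for k
    using indep(3) unfolding indep_vars_def by auto
  ultimately interpret cox_dividend_model M q llow d E Y G U p x
    using assms(2-4,6,10,20) U(2) by unfold_locales auto
  show ?thesis
    by (rule V_tendsto)
qed

end
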